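(* Let $n\ge1$. A permutation $w\in\mathfrak S_n$ has $\operatorname{exc}(w)=k$ if and only if $w$ can be written as a product of $k$ permutations each having exactly one excedance, and not as a product of fewer such permutations; that is, $\operatorname{exc}=\ell_T$ where $T=\{t\in\mathfrak S_n:\operatorname{exc}(t)=1\}$. Furthermore, $\operatorname{exc}$ is subadditive, and the poset $(\mathfrak S_n,\le_{\operatorname{exc}})$, where $x\le_{\operatorname{exc}}y$ iff $\operatorname{exc}(x)+\operatorname{exc}(x^{-1}y)=\operatorname{exc}(y)$, is graded by $\operatorname{exc}$ (every cover relation $x\lessdot y$ has $\operatorname{exc}(y)=\operatorname{exc}(x)+1$), the number of elements of rank $k$ is the Eulerian number counting permutations of $[n]$ with $k$ excedances, and it has a unique maximal element, namely $23\cdots n1=(1\,2\,\cdots\,n)$.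
   Context: For $w\in\mathfrak S_n$, $\operatorname{exc}(w)=\#\{i\in[n-1]: w(i)>i\}$ is the number of excedances. Permutations are composed as functions. $\ell_T(x)$ is the minimum number of elements of $T$ whose product is $x$. *)

theory Defs
  imports "HOL-Combinatorics.Permutations"
begin

definition Sn :: "nat \<Rightarrow> (nat \<Rightarrow> nat) set" where
  "Sn n = {w. w permutes {1..n}}"

definition exc :: "nat \<Rightarrow> (nat \<Rightarrow> nat) \<Rightarrow> nat" where
  "exc n w = card {i \<in> {1..n-1}. w i > i}"

definition Texc :: "nat \<Rightarrow> (nat \<Rightarrow> nat) set" where
  "Texc n = {t \<in> Sn n. exc n t = 1}"

definition listprod :: "(nat \<Rightarrow> nat) list \<Rightarrow> (nat \<Rightarrow> nat)" where
  "listprod ts = foldr (\<circ>) ts id"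

definition lenT :: "(nat \<Rightarrow> nat) set \<Rightarrow> (nat \<Rightarrow> nat) \<Rightarrow> nat" where
  "lenT T x = (LEAST k. \<exists>ts. length ts = k \<and> set ts \<subseteq> T \<and> listprod ts = x)"

definition le_exc :: "nat \<Rightarrow> (nat \<Rightarrow> nat) \<Rightarrow> (nat \<Rightarrow> nat) \<Rightarrow> bool" where
  "le_exc n x y \<longleftrightarrow> exc n x + exc n (inv x \<circ> y) = exc n y"

definition lt_exc :: "nat \<Rightarrow> (nat \<Rightarrow> nat) \<Rightarrow> (nat \<Rightarrow> nat) \<Rightarrow> bool" where
  "lt_exc n x y \<longleftrightarrow> le_exc n x y \<and> x \<noteq> y"

definition covers_exc :: "nat \<Rightarrow> (nat \<Rightarrow> nat) \<Rightarrow> (nat \<Rightarrow> nat) \<Rightarrow> bool" where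
  "covers_exc n x y \<longleftrightarrow> x \<in> Sn n \<and> y \<in> Sn n \<and> lt_exc n x y \<and>
     \<not> (\<exists>z \<in> Sn n. lt_exc n x z \<and> lt_exc n z y)"

definition maximal_exc :: "nat \<Rightarrow> (nat \<Rightarrow> nat) \<Rightarrow> bool" where
  "maximal_exc n y \<longleftrightarrow> y \<in> Sn n \<and> (\<forall>z \<in> Sn n. le_exc n y z \<longrightarrow> z = y)"

definition eulerian :: "nat \<Rightarrow> nat \<Rightarrow> nat" where
  "eulerian n k = card {w \<in> Sn n. exc n w = k}"

text \<open>The long cycle (1 2 ... n), i.e. one-line notation 2 3 ... n 1.\<close>
definition longcycle :: "nat \<Rightarrow> nat \<Rightarrow> nat" where
  "longcycle n i = (if 1 \<le> i \<and> i < n then i + 1 else if i = n then 1 else i)"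

end

theory Submission
  imports Defs
begin

text \<open>The excedances of a product x \<circ> y lie among the excedances of y and the
  preimages under y of excedances of x, so exc is subadditive and bounded by the length with
  respect to one-excedance permutations. Conversely, if a is the largest excedance of w, then
  w = w' \<circ> t where t has the single excedance a and w' keeps all other excedances of w; t is
  found by repeatedly composing with the transposition of a and w a, which terminates because
  w a decreases. Subadditivity makes the excedance order a
  partial order in which any strict relation x < y can be refined by a one-excedance step
  x < x \<circ> t < y, so covers raise exc by exactly one. Finally, for the long cycle c,
  i \<mapsto> y\<inverse>(i+1) injects the excedances of y\<inverse>c into the non-excedances of y other than y\<inverse>1,
  so exc y + exc (y\<inverse>c) \<le> n - 1 = exc c: every y lies below c.\<close>

definition excedances :: "(nat \<Rightarrow> nat) \<Rightarrow> nat set" where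
  "excedances w = {i. i < w i}"

lemma excedances_subset:
  assumes "w permutes {1..n}"
  shows "excedances w \<subseteq> {1..n-1}"
proof
  fix i assume "i \<in> excedances w"
  then have gt: "i < w i" by (simp add: excedances_def)
  then have "i \<in> {1..n}" using permutes_not_in[OF assms] by (metis less_irrefl)
  moreover have "w i \<in> {1..n}" using calculation permutes_in_image[OF assms] by blast
  ultimately show "i \<in> {1..n-1}" using gt by auto
qed

lemma finite_excedances: "w permutes {1..n} \<Longrightarrow> finite (excedances w)"
  using excedances_subset finite_subset by blast

lemma exc_eq_card_excedances:
  assumes "w permutes {1..n}"
  shows "exc n w = card (excedances w)"
proof -
  have "{i \<in> {1..n-1}. w i > i} = excedances w"
    using excedances_subset[OF assms] by (auto simp: excedances_def)
  then show ?thesis by (simp add: exc_def)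
qed

lemma exc_le: "exc n w \<le> n - 1"
proof -
  have "exc n w \<le> card {1..n-1}" unfolding exc_def by (rule card_mono) auto
  then show ?thesis by simp
qed

lemma excedances_empty_imp_id:
  assumes "inj w" and "excedances w = {}"
  shows "w = id"
proof (rule ccontr)
  assume "w \<noteq> id"
  then have ex: "\<exists>i. w i \<noteq> i" by auto
  define i where "i = (LEAST i. w i \<noteq> i)"
  have moved: "w i \<noteq> i" unfolding i_def by (rule LeastI_ex[OF ex])
  have fixed_below: "\<And>j. j < i \<Longrightarrow> w j = j" unfolding i_def using not_less_Least by blast
  have "\<not> w i < i"
  proof
    assume "w i < i"
    then have "w (w i) = w i" by (rule fixed_below)
    with moved \<open>inj w\<close> show False by (simp add: inj_def)
  qed
  with moved have "i \<in> excedances w" by (simp add: excedances_def)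
  with assms(2) show False by simp
qed

lemma card_excedances_comp_le:
  assumes "inj y" "finite (excedances x)" "finite (excedances y)"
  shows "card (excedances (x \<circ> y)) \<le> card (excedances x) + card (excedances y)"
proof -
  let ?B = "{i. y i \<le> i \<and> i < x (y i)}"
  have inj: "inj_on y ?B" using assms(1) by (simp add: inj_on_def inj_def)
  have img: "y ` ?B \<subseteq> excedances x" by (auto simp: excedances_def)
  have finB: "finite ?B" using finite_imageD[OF finite_subset[OF img assms(2)] inj] .
  have cardB: "card ?B \<le> card (excedances x)" using card_inj_on_le[OF inj img assms(2)] .
  have "excedances (x \<circ> y) \<subseteq> excedances y \<union> ?B" by (auto simp: excedances_def)
  then have "card (excedances (x \<circ> y)) \<le> card (excedances y \<union> ?B)"
    using finB assms(3) by (intro card_mono) auto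
  also have "\<dots> \<le> card (excedances y) + card ?B" by (rule card_Un_le)
  finally show ?thesis using cardB by simp
qed

lemma exc_id [simp]: "exc n id = 0"
  by (simp add: exc_def)

lemma Sn_id: "id \<in> Sn n"
  by (simp add: Sn_def permutes_id)

lemma Sn_comp: "x \<in> Sn n \<Longrightarrow> y \<in> Sn n \<Longrightarrow> x \<circ> y \<in> Sn n"
  by (simp add: Sn_def permutes_compose)

lemma Sn_inv: "x \<in> Sn n \<Longrightarrow> inv x \<in> Sn n"
  by (simp add: Sn_def permutes_inv)

lemma Sn_comp_inv_cancel: "x \<in> Sn n \<Longrightarrow> x \<circ> (inv x \<circ> y) = y"
  by (simp add: Sn_def o_assoc permutes_inv_o)

lemma Sn_inv_comp_cancel: "x \<in> Sn n \<Longrightarrow> inv x \<circ> (x \<circ> y) = y"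
  by (simp add: Sn_def o_assoc permutes_inv_o)

lemma exc_comp_le: "x \<in> Sn n \<Longrightarrow> y \<in> Sn n \<Longrightarrow> exc n (x \<circ> y) \<le> exc n x + exc n y"
  using card_excedances_comp_le[of y x] permutes_inj[of y]
  by (simp add: Sn_def exc_eq_card_excedances finite_excedances permutes_compose)

lemma exc_eq_0_iff:
  assumes "w \<in> Sn n"
  shows "exc n w = 0 \<longleftrightarrow> w = id"
proof -
  have p: "w permutes {1..n}" using assms by (simp add: Sn_def)
  then have "exc n w = 0 \<longleftrightarrow> excedances w = {}"
    by (simp add: exc_eq_card_excedances finite_excedances)
  then show ?thesis
    using excedances_empty_imp_id[OF permutes_inj[OF p]] by (auto simp: excedances_def)
qed

lemma exc_le_add_exc_inv_comp:
  assumes "x \<in> Sn n" "y \<in> Sn n"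
  shows "exc n y \<le> exc n x + exc n (inv x \<circ> y)"
  using exc_comp_le[OF assms(1) Sn_comp[OF Sn_inv[OF assms(1)] assms(2)]]
  by (simp add: Sn_comp_inv_cancel[OF assms(1)])

lemma excedances_transpose: "a < b \<Longrightarrow> excedances (transpose a b) = {a}"
  by (auto simp: excedances_def transpose_def)

lemma excedances_comp_transpose:
  assumes "a < w a" "w (w a) < w a"
  shows "excedances (w \<circ> transpose a (w a)) =
           (if w (w a) \<le> a then excedances w - {a} else excedances w)"
proof -
  have "i \<in> excedances (w \<circ> transpose a (w a)) \<longleftrightarrow>
          i \<in> (if w (w a) \<le> a then excedances w - {a} else excedances w)" for i
    using assms by (cases "i = a"; cases "i = w a") (auto simp: excedances_def)
  then show ?thesis by blast
qed

lemma factor_off_largest_excedance: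
  assumes "w permutes S" "a < w a" "\<forall>c>a. w c \<le> c"
  shows "\<exists>t w'. t permutes S \<and> w' permutes S \<and> w = w' \<circ> t \<and>
           excedances t = {a} \<and> t a = w a \<and> (\<forall>c > w a. t c = c) \<and>
           excedances w' = excedances w - {a}"
  using assms
proof (induction "w a" arbitrary: w rule: less_induct)
  case less
  define b where "b = w a"
  have "a \<in> S" using less.prems(1,2) permutes_not_in by (metis less_irrefl)
  then have "b \<in> S" unfolding b_def using permutes_in_image[OF less.prems(1)] by blast
  have ab: "a < b" using less.prems(2) b_def by simp
  have wb: "w b < b"
  proof -
    have "w b \<noteq> w a" using ab permutes_inj[OF less.prems(1)] by (metis inj_def less_irrefl)
    then show ?thesis using less.prems(3) ab b_def by fastforce
  qed
  define w1 where "w1 = w \<circ> transpose a b"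
  have w1: "w1 permutes S"
    unfolding w1_def by (rule permutes_compose[OF permutes_swap_id[OF \<open>a \<in> S\<close> \<open>b \<in> S\<close>] less.prems(1)])
  have w_eq: "w = w1 \<circ> transpose a b" by (rule ext) (simp add: w1_def)
  have E1: "excedances w1 = (if w b \<le> a then excedances w - {a} else excedances w)"
    unfolding w1_def b_def by (rule excedances_comp_transpose) (use less.prems(2) wb b_def in auto)
  show ?case
  proof (cases "w b \<le> a")
    case True
    have "transpose a b a = w a" "\<forall>c > w a. transpose a b c = c" using ab b_def by auto
    moreover have "excedances w1 = excedances w - {a}" using E1 True by simp
    ultimately show ?thesis
      using w1 w_eq excedances_transpose[OF ab] permutes_swap_id[OF \<open>a \<in> S\<close> \<open>b \<in> S\<close>]
      by blast
  next
    case False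
    have w1a: "w1 a = w b" by (simp add: w1_def)
    have "\<forall>c>a. w1 c \<le> c"
    proof (intro allI impI)
      fix c assume "a < c"
      then show "w1 c \<le> c" using less.prems(3) b_def by (cases "c = b") (auto simp: w1_def)
    qed
    then obtain t1 w' where t1: "t1 permutes S" and w': "w' permutes S" and w1_eq: "w1 = w' \<circ> t1"
      and Et1: "excedances t1 = {a}" and t1a: "t1 a = w b" and t1_fix: "\<forall>c > w b. t1 c = c"
      and Ew': "excedances w' = excedances w1 - {a}"
      using less.hyps[of w1] w1 w1a False wb b_def by auto
    define t where "t = t1 \<circ> transpose a b"
    have t1b: "t1 b = b" using t1_fix wb by simp
    have "i \<in> excedances t \<longleftrightarrow> i = a" for i
      using Et1 t1a t1b ab wb
      by (cases "i = a"; cases "i = b") (auto simp: t_def excedances_def)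
    then have "excedances t = {a}" by blast
    moreover have "t permutes S"
      unfolding t_def by (rule permutes_compose[OF permutes_swap_id[OF \<open>a \<in> S\<close> \<open>b \<in> S\<close>] t1])
    moreover have "\<forall>c > w a. t c = c" using t1_fix wb ab b_def by (auto simp: t_def)
    moreover have "w = w' \<circ> t" using w_eq w1_eq by (simp add: t_def o_assoc)
    moreover have "t a = w a" using t1b b_def by (simp add: t_def)
    moreover have "excedances w' = excedances w - {a}" using Ew' E1 False by simp
    ultimately show ?thesis using w' by blast
  qed
qed

lemma listprod_Nil [simp]: "listprod [] = id"
  by (simp add: listprod_def)

lemma listprod_Cons [simp]: "listprod (t # ts) = t \<circ> listprod ts"
  by (simp add: listprod_def)

lemma listprod_append_single: "listprod (ts @ [t]) = listprod ts \<circ> t"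
  by (induction ts) (simp_all add: o_assoc)

lemma listprod_in_Sn: "set ts \<subseteq> Sn n \<Longrightarrow> listprod ts \<in> Sn n"
  by (induction ts) (simp_all add: Sn_id Sn_comp)

lemma Texc_subset_Sn: "Texc n \<subseteq> Sn n"
  by (auto simp: Texc_def)

lemma exc_listprod_Texc_le: "set ts \<subseteq> Texc n \<Longrightarrow> exc n (listprod ts) \<le> length ts"
proof (induction ts)
  case (Cons t ts)
  then have "t \<in> Sn n" "exc n t = 1" "listprod ts \<in> Sn n"
    using listprod_in_Sn Texc_subset_Sn by (auto simp: Texc_def)
  then have "exc n (listprod (t # ts)) \<le> exc n t + exc n (listprod ts)"
    unfolding listprod_Cons by (intro exc_comp_le)
  moreover have "exc n (listprod ts) \<le> length ts" using Cons by simp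
  moreover have "length (t # ts) = length ts + 1" by simp
  ultimately show ?case using \<open>exc n t = 1\<close> by linarith
qed simp

lemma exc_factorization:
  assumes "w \<in> Sn n"
  shows "\<exists>ts. length ts = exc n w \<and> set ts \<subseteq> Texc n \<and> listprod ts = w"
  using assms
proof (induction "exc n w" arbitrary: w)
  case 0
  then have "w = id" using exc_eq_0_iff by metis
  then show ?case using 0 by (intro exI[of _ "[]"]) simp
next
  case (Suc k)
  have p: "w permutes {1..n}" using Suc.prems by (simp add: Sn_def)
  have fin: "finite (excedances w)" by (rule finite_excedances[OF p])
  have card: "card (excedances w) = Suc k" using Suc.hyps(2) exc_eq_card_excedances[OF p] by simp
  define a where "a = Max (excedances w)"
  have "excedances w \<noteq> {}" using card by auto
  then have a: "a \<in> excedances w" unfolding a_def using Max_in[OF fin] by blast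
  have "\<forall>c>a. w c \<le> c"
    using Max_ge[OF fin] unfolding a_def excedances_def by (meson mem_Collect_eq not_le)
  moreover have "a < w a" using a by (simp add: excedances_def)
  ultimately obtain t w' where t: "t permutes {1..n}" and w': "w' permutes {1..n}"
      and w_eq: "w = w' \<circ> t" and Et: "excedances t = {a}"
      and Ew': "excedances w' = excedances w - {a}"
    using factor_off_largest_excedance[OF p] by blast
  have "t \<in> Texc n" using t Et by (simp add: Texc_def Sn_def exc_eq_card_excedances)
  moreover have "exc n w' = k" using w' Ew' card a fin by (simp add: exc_eq_card_excedances)
  then obtain ts where "length ts = k" "set ts \<subseteq> Texc n" "listprod ts = w'"
    using Suc.hyps(1) w' by (auto simp: Sn_def)
  ultimately show ?case
    using w_eq Suc.hyps(2) by (intro exI[of _ "ts @ [t]"]) (simp add: listprod_append_single)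
qed

lemma lenT_Texc_eq_exc:
  assumes "w \<in> Sn n"
  shows "lenT (Texc n) w = exc n w"
  unfolding lenT_def
proof (rule Least_equality)
  show "\<exists>ts. length ts = exc n w \<and> set ts \<subseteq> Texc n \<and> listprod ts = w"
    by (rule exc_factorization[OF assms])
qed (use exc_listprod_Texc_le in blast)

lemma exc_eq_iff_minimal_Texc_factorization:
  assumes "w \<in> Sn n"
  shows "exc n w = k \<longleftrightarrow>
           (\<exists>ts. length ts = k \<and> set ts \<subseteq> Texc n \<and> listprod ts = w) \<and>
           (\<forall>ts. length ts < k \<longrightarrow> set ts \<subseteq> Texc n \<longrightarrow> listprod ts \<noteq> w)"
  using exc_factorization[OF assms] exc_listprod_Texc_le[of _ n]
  by (metis le_neq_implies_less not_less)

lemma le_exc_refl: "x \<in> Sn n \<Longrightarrow> le_exc n x x"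
  by (simp add: le_exc_def Sn_def permutes_inv_o)

lemma le_exc_id: "le_exc n id x"
  by (simp add: le_exc_def)

lemma le_exc_antisym:
  assumes "x \<in> Sn n" "y \<in> Sn n" "le_exc n x y" "le_exc n y x"
  shows "x = y"
proof -
  have "exc n (inv x \<circ> y) = 0" using assms(3,4) by (simp add: le_exc_def)
  then have "inv x \<circ> y = id" using exc_eq_0_iff Sn_comp Sn_inv assms(1,2) by blast
  then show ?thesis using Sn_comp_inv_cancel[OF assms(1), of y] by simp
qed

lemma le_exc_trans:
  assumes S: "x \<in> Sn n" "y \<in> Sn n" "z \<in> Sn n" and "le_exc n x y" "le_exc n y z"
  shows "le_exc n x z"
proof -
  have "inv x \<circ> z = (inv x \<circ> y) \<circ> (inv y \<circ> z)"
    by (simp add: comp_assoc Sn_comp_inv_cancel[OF S(2)])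
  then have "exc n (inv x \<circ> z) \<le> exc n (inv x \<circ> y) + exc n (inv y \<circ> z)"
    using exc_comp_le S Sn_inv Sn_comp by metis
  with exc_le_add_exc_inv_comp[OF S(1,3)] assms(4,5) show ?thesis by (simp add: le_exc_def)
qed

lemma lt_exc_refine:
  assumes xS: "x \<in> Sn n" and yS: "y \<in> Sn n" and "lt_exc n x y"
  obtains z where "z \<in> Sn n" "le_exc n x z" "le_exc n z y" "exc n z = exc n x + 1"
proof -
  define u where "u = inv x \<circ> y"
  have uS: "u \<in> Sn n" unfolding u_def using xS yS Sn_inv Sn_comp by blast
  have sum: "exc n x + exc n u = exc n y" and "x \<noteq> y"
    using \<open>lt_exc n x y\<close> by (auto simp: lt_exc_def le_exc_def u_def)
  have y_eq: "y = x \<circ> u" unfolding u_def by (rule Sn_comp_inv_cancel[OF xS, symmetric])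
  have "u \<noteq> id" using y_eq \<open>x \<noteq> y\<close> by auto
  then have "exc n u \<noteq> 0" using exc_eq_0_iff[OF uS] by simp
  obtain ts0 where ts0: "length ts0 = exc n u" "set ts0 \<subseteq> Texc n" "listprod ts0 = u"
    using exc_factorization[OF uS] by blast
  with \<open>exc n u \<noteq> 0\<close> obtain t ts where "ts0 = t # ts" by (cases ts0) auto
  with ts0 have tsT: "set (t # ts) \<subseteq> Texc n" and u_eq: "u = t \<circ> listprod ts"
    and len: "length ts = exc n u - 1" by auto
  have t: "t \<in> Sn n" "exc n t = 1" using tsT by (auto simp: Texc_def)
  have tsS: "listprod ts \<in> Sn n" using tsT Texc_subset_Sn by (intro listprod_in_Sn) auto
  have ts_le: "exc n (listprod ts) \<le> exc n u - 1" using exc_listprod_Texc_le[of ts n] tsT len by simp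
  define z where "z = x \<circ> t"
  have zS: "z \<in> Sn n" unfolding z_def using Sn_comp xS t by blast
  have "exc n z \<le> exc n x + 1" using exc_comp_le[OF xS t(1)] t z_def by simp
  moreover have y_eq': "y = z \<circ> listprod ts" using y_eq u_eq z_def by (simp add: o_assoc)
  then have "exc n y \<le> exc n z + exc n (listprod ts)" using exc_comp_le[OF zS tsS] by simp
  ultimately have z: "exc n z = exc n x + 1" and ts: "exc n (listprod ts) = exc n u - 1"
    using sum ts_le \<open>exc n u \<noteq> 0\<close> by linarith+
  have "le_exc n x z" using z t by (simp add: le_exc_def z_def Sn_inv_comp_cancel[OF xS])
  moreover have "le_exc n z y"
    using z ts sum \<open>exc n u \<noteq> 0\<close> by (simp add: le_exc_def y_eq' Sn_inv_comp_cancel[OF zS])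
  ultimately show ?thesis using that zS z by blast
qed

lemma covers_exc_imp_exc_Suc:
  assumes "covers_exc n x y"
  shows "exc n y = exc n x + 1"
proof -
  have xS: "x \<in> Sn n" and yS: "y \<in> Sn n" and lt: "lt_exc n x y"
    and no_between: "\<not> (\<exists>z \<in> Sn n. lt_exc n x z \<and> lt_exc n z y)"
    using assms by (auto simp: covers_exc_def)
  obtain z where z: "z \<in> Sn n" "le_exc n x z" "le_exc n z y" "exc n z = exc n x + 1"
    using lt_exc_refine[OF xS yS lt] .
  show ?thesis
  proof (rule ccontr)
    assume "exc n y \<noteq> exc n x + 1"
    then have "z \<noteq> y" using z(4) by auto
    moreover have "x \<noteq> z" using z(4) by auto
    ultimately show False using no_between z by (auto simp: lt_exc_def)
  qed
qed

lemma longcycle_in_Sn: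
  assumes "n \<ge> 1"
  shows "longcycle n \<in> Sn n"
proof -
  define d where "d i = (if 2 \<le> i \<and> i \<le> n then i - 1 else if i = 1 then n else i)" for i
  have "bij_betw (longcycle n) {1..n} {1..n}"
    by (rule bij_betw_byWitness[where f' = d]) (use assms in \<open>auto simp: d_def longcycle_def\<close>)
  moreover have "\<And>x. x \<notin> {1..n} \<Longrightarrow> longcycle n x = x" using assms by (auto simp: longcycle_def)
  ultimately show ?thesis unfolding Sn_def using bij_imp_permutes by blast
qed

lemma exc_longcycle: "exc n (longcycle n) = n - 1"
proof -
  have "{i \<in> {1..n-1}. longcycle n i > i} = {1..n-1}" by (auto simp: longcycle_def)
  then show ?thesis by (simp add: exc_def)
qed

lemma exc_add_exc_inv_comp_longcycle_le:
  assumes "n \<ge> 1" and "y \<in> Sn n"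
  shows "exc n y + exc n (inv y \<circ> longcycle n) \<le> n - 1"
proof -
  have p: "y permutes {1..n}" using assms(2) by (simp add: Sn_def)
  have ip: "inv y permutes {1..n}" by (rule permutes_inv[OF p])
  define A where "A = {i \<in> {1..n-1}. (inv y \<circ> longcycle n) i > i}"
  define D where "D = {1..n} - excedances y - {inv y 1}"
  have "card A \<le> card D"
  proof (rule card_inj_on_le[where f = "\<lambda>i. inv y (i + 1)"])
    show "inj_on (\<lambda>i. inv y (i + 1)) A"
      using permutes_inj[OF ip] by (auto simp: inj_on_def inj_def)
    show "(\<lambda>i. inv y (i + 1)) ` A \<subseteq> D"
    proof clarify
      fix i assume "i \<in> A"
      then have i: "1 \<le> i" "i < n" and "i < inv y (longcycle n i)" using assms(1) by (auto simp: A_def)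
      then have "i < inv y (i + 1)" by (simp add: longcycle_def)
      have "inv y (i + 1) \<in> {1..n}" using i permutes_in_image[OF ip] by simp
      moreover have "inv y (i + 1) \<notin> excedances y"
        using \<open>i < inv y (i + 1)\<close> by (simp add: excedances_def permutes_inverses(1)[OF p])
      moreover have "inv y (i + 1) \<noteq> inv y 1" using i(1) permutes_inj[OF ip] by (simp add: inj_eq)
      ultimately show "inv y (i + 1) \<in> D" by (simp add: D_def)
    qed
  qed (simp add: D_def)
  moreover have "card D = n - exc n y - 1"
  proof -
    have "inv y 1 \<in> {1..n}" using assms(1) permutes_in_image[OF ip] by simp
    moreover from this have "inv y 1 \<notin> excedances y"
      by (simp add: excedances_def permutes_inverses(1)[OF p])
    moreover have "excedances y \<subseteq> {1..n}" using excedances_subset[OF p] by fastforce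
    ultimately show ?thesis
      unfolding D_def using finite_excedances[OF p]
      by (simp add: card_Diff_subset exc_eq_card_excedances[OF p])
  qed
  moreover have "exc n (inv y \<circ> longcycle n) = card A" by (simp add: exc_def A_def)
  ultimately show ?thesis using exc_le[of n y] by simp
qed

lemma le_exc_longcycle:
  assumes "n \<ge> 1" and "y \<in> Sn n"
  shows "le_exc n y (longcycle n)"
  using exc_le_add_exc_inv_comp[OF assms(2) longcycle_in_Sn[OF assms(1)]]
    exc_add_exc_inv_comp_longcycle_le[OF assms] exc_longcycle[of n]
  by (simp add: le_exc_def)

lemma maximal_exc_iff_longcycle:
  assumes "n \<ge> 1"
  shows "maximal_exc n y \<longleftrightarrow> y = longcycle n"
proof
  assume "maximal_exc n y"
  then show "y = longcycle n"
    using le_exc_longcycle[OF assms] longcycle_in_Sn[OF assms] by (auto simp: maximal_exc_def)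
next
  assume y: "y = longcycle n"
  have "z = y" if "z \<in> Sn n" "le_exc n y z" for z
    using le_exc_antisym[OF _ that(1)] that le_exc_longcycle[OF assms that(1)]
      longcycle_in_Sn[OF assms] y by blast
  then show "maximal_exc n y" using y longcycle_in_Sn[OF assms] by (auto simp: maximal_exc_def)
qed

theorem mainTheorem17:
  fixes n :: nat
  assumes "n \<ge> 1"
  shows
    "(\<forall>w \<in> Sn n. \<forall>k.
        exc n w = k \<longleftrightarrow>
          ((\<exists>ts. length ts = k \<and> set ts \<subseteq> Texc n \<and> listprod ts = w) \<and>
           (\<forall>ts. length ts < k \<longrightarrow> set ts \<subseteq> Texc n \<longrightarrow> listprod ts \<noteq> w)))
   \<and> (\<forall>w \<in> Sn n. exc n w = lenT (Texc n) w)
   \<and> (\<forall>x \<in> Sn n. \<forall>y \<in> Sn n. exc n (x \<circ> y) \<le> exc n x + exc n y)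
   \<and> (\<forall>x \<in> Sn n. le_exc n x x)
   \<and> (\<forall>x \<in> Sn n. \<forall>y \<in> Sn n. le_exc n x y \<and> le_exc n y x \<longrightarrow> x = y)
   \<and> (\<forall>x \<in> Sn n. \<forall>y \<in> Sn n. \<forall>z \<in> Sn n. le_exc n x y \<and> le_exc n y z \<longrightarrow> le_exc n x z)
   \<and> (\<forall>x \<in> Sn n. le_exc n id x) \<and> exc n id = 0
   \<and> (\<forall>x y. covers_exc n x y \<longrightarrow> exc n y = exc n x + 1)
   \<and> (\<forall>k. card {w \<in> Sn n. exc n w = k} = eulerian n k)
   \<and> {y. maximal_exc n y} = {longcycle n}"
proof (intro conjI ballI allI impI)
  show "{y. maximal_exc n y} = {longcycle n}" using maximal_exc_iff_longcycle[OF assms] by blast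
qed (simp_all add: exc_eq_iff_minimal_Texc_factorization lenT_Texc_eq_exc exc_comp_le
       le_exc_refl le_exc_id covers_exc_imp_exc_Suc eulerian_def,
     (blast intro: le_exc_antisym le_exc_trans)+)

end
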